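(* Let $G$ be a graph whose vertex set $V(G)$ is partitioned into an independent set $S$ and a clique $K$ (so $G$ is a split graph). Suppose that for any three distinct vertices $u,v,w\in S$ there exist two distinct vertices $x,y\in\{u,v,w\}$ with $N_G(x)\supseteq N_G(y)$. Then $G$ is an interval graph.
   Context: All graphs are finite, simple and undirected. $N_G(v)$ denotes the set of neighbors of $v$ in $G$. An interval graph is the intersection graph of a finite family of closed intervals on the real line. *)

theory Defs
  imports Complex_Main
begin

definition simple_graph :: "'a set \<Rightarrow> ('a \<Rightarrow> 'a \<Rightarrow> bool) \<Rightarrow> bool" where
  "simple_graph V E \<longleftrightarrow> finite V \<and> (\<forall>u v. E u v \<longrightarrow> u \<in> V \<and> v \<in> V)
     \<and> (\<forall>u v. E u v \<longrightarrow> E v u) \<and> (\<forall>v. \<not> E v v)"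

definition nbhd :: "'a set \<Rightarrow> ('a \<Rightarrow> 'a \<Rightarrow> bool) \<Rightarrow> 'a \<Rightarrow> 'a set" where
  "nbhd V E v = {u \<in> V. E v u}"

definition independent_set :: "'a set \<Rightarrow> ('a \<Rightarrow> 'a \<Rightarrow> bool) \<Rightarrow> 'a set \<Rightarrow> bool" where
  "independent_set V E S \<longleftrightarrow> S \<subseteq> V \<and> (\<forall>u\<in>S. \<forall>v\<in>S. \<not> E u v)"

definition clique :: "'a set \<Rightarrow> ('a \<Rightarrow> 'a \<Rightarrow> bool) \<Rightarrow> 'a set \<Rightarrow> bool" where
  "clique V E K \<longleftrightarrow> K \<subseteq> V \<and> (\<forall>u\<in>K. \<forall>v\<in>K. u \<noteq> v \<longrightarrow> E u v)"

definition interval_graph :: "'a set \<Rightarrow> ('a \<Rightarrow> 'a \<Rightarrow> bool) \<Rightarrow> bool" where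
  "interval_graph V E \<longleftrightarrow> (\<exists>l r :: 'a \<Rightarrow> real.
     (\<forall>v\<in>V. l v \<le> r v) \<and>
     (\<forall>u\<in>V. \<forall>v\<in>V. u \<noteq> v \<longrightarrow> (E u v \<longleftrightarrow> {l u..r u} \<inter> {l v..r v} \<noteq> {})))"

end

theory Submission
  imports Defs
begin

text \<open>Since no three vertices of S have pairwise incomparable neighbourhoods, S splits into
  two chains A and B under neighbourhood inclusion (Dilworth's theorem for width two).
  Vertices of A are placed at negative points, those of B at positive points, each chain
  ordered so that larger neighbourhoods lie closer to 0. A clique vertex k then receives
  the interval from the leftmost point of A adjacent to k to the rightmost point of B
  adjacent to k, extended to contain 0; this makes all clique intervals meet and each
  one contains exactly the points of its neighbours in S.\<close>

definition nested_on :: "('a \<Rightarrow> 'b set) \<Rightarrow> 'a set \<Rightarrow> bool" where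
  "nested_on f C \<longleftrightarrow> (\<forall>x\<in>C. \<forall>y\<in>C. f x \<subseteq> f y \<or> f y \<subseteq> f x)"

lemma nested_on_subset: "nested_on f C \<Longrightarrow> D \<subseteq> C \<Longrightarrow> nested_on f D"
  unfolding nested_on_def by blast

lemma nested_on_insert:
  "nested_on f (insert x C) \<longleftrightarrow> nested_on f C \<and> (\<forall>y\<in>C. f x \<subseteq> f y \<or> f y \<subseteq> f x)"
  unfolding nested_on_def by blast

definition triples_have_nested_pair :: "('a \<Rightarrow> 'b set) \<Rightarrow> 'a set \<Rightarrow> bool" where
  "triples_have_nested_pair f P \<longleftrightarrow>
     (\<forall>u\<in>P. \<forall>v\<in>P. \<forall>w\<in>P. u \<noteq> v \<and> u \<noteq> w \<and> v \<noteq> w \<longrightarrow>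
        (\<exists>x\<in>{u, v, w}. \<exists>y\<in>{u, v, w}. x \<noteq> y \<and> f y \<subseteq> f x))"

lemma triples_have_nested_pair_subset:
  "triples_have_nested_pair f P \<Longrightarrow> Q \<subseteq> P \<Longrightarrow> triples_have_nested_pair f Q"
  unfolding triples_have_nested_pair_def by (meson subsetD)

lemma nested_on_incomparables:
  assumes "triples_have_nested_pair f P" and "x \<in> P"
  shows "nested_on f {y \<in> P. \<not> f y \<subseteq> f x \<and> \<not> f x \<subseteq> f y}"
  unfolding nested_on_def
proof (intro ballI)
  fix u v assume u: "u \<in> {y \<in> P. \<not> f y \<subseteq> f x \<and> \<not> f x \<subseteq> f y}"
    and v: "v \<in> {y \<in> P. \<not> f y \<subseteq> f x \<and> \<not> f x \<subseteq> f y}"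
  show "f u \<subseteq> f v \<or> f v \<subseteq> f u"
  proof (cases "u = v")
    case False
    moreover have "u \<noteq> x" "v \<noteq> x" using u v by auto
    ultimately have "\<exists>a\<in>{u, v, x}. \<exists>b\<in>{u, v, x}. a \<noteq> b \<and> f b \<subseteq> f a"
      using assms u v unfolding triples_have_nested_pair_def by blast
    with u v show ?thesis by auto
  qed simp
qed

lemma nested_on_obtain_least:
  assumes "finite U" "U \<noteq> {}" "nested_on f U"
  obtains m where "m \<in> U" "\<And>u. u \<in> U \<Longrightarrow> f m \<subseteq> f u"
proof -
  obtain M where "M \<in> f ` U" and M_min: "\<forall>b\<in>f ` U. b \<subseteq> M \<longrightarrow> M = b"
    using finite_has_minimal[of "f ` U"] assms(1,2) by blast
  then obtain m where "m \<in> U" "M = f m" by blast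
  with M_min assms(3) show thesis
    using that[of m] unfolding nested_on_def by blast
qed

text \<open>Inductive step of the two-chain decomposition, for x maximal, R the elements below x,
  U those incomparable with x and m least in U: once m lies in the chain B, all of U can
  join B and x can join A.\<close>

lemma nested_cover_exchange:
  assumes cover: "A \<union> B = insert m R" "nested_on f A" "nested_on f B" "m \<in> B"
    and below: "\<And>y. y \<in> R \<Longrightarrow> f y \<subseteq> f x" and "\<not> f m \<subseteq> f x"
    and "nested_on f U" and least: "\<And>u. u \<in> U \<Longrightarrow> f m \<subseteq> f u"
  shows "nested_on f (insert x (A - {m}))" "nested_on f (B \<union> U)"
proof -
  show "nested_on f (insert x (A - {m}))"
    using cover below nested_on_subset[OF cover(2)] unfolding nested_on_insert by blast
  have "f y \<subseteq> f m" if "y \<in> B" for y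
  proof (cases "y = m")
    case False
    then have "f y \<subseteq> f x" using that cover(1) below by blast
    with cover(3,4) that \<open>\<not> f m \<subseteq> f x\<close> show ?thesis unfolding nested_on_def by blast
  qed simp
  with cover(3) \<open>nested_on f U\<close> least show "nested_on f (B \<union> U)"
    unfolding nested_on_def by (meson Un_iff subset_trans)
qed

lemma cover_by_two_nested:
  assumes "finite P" and "triples_have_nested_pair f P"
  shows "\<exists>A B. A \<union> B = P \<and> nested_on f A \<and> nested_on f B"
  using assms
proof (induction P rule: finite_psubset_induct)
  case (psubset P)
  show ?case
  proof (cases "P = {}")
    case True
    then show ?thesis by (simp add: nested_on_def)
  next
    case False
    then obtain x where x: "x \<in> P" and x_max: "\<And>y. y \<in> P \<Longrightarrow> f x \<subseteq> f y \<Longrightarrow> f y = f x"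
      using finite_has_maximal[of "f ` P"] psubset.hyps(1) by auto
    define U where "U = {y \<in> P. \<not> f y \<subseteq> f x \<and> \<not> f x \<subseteq> f y}"
    have U_nested: "nested_on f U"
      unfolding U_def using nested_on_incomparables[OF psubset.prems x] .
    have comparable: "f x \<subseteq> f y \<or> f y \<subseteq> f x" if "y \<in> P - U" for y
      using that unfolding U_def by blast
    show ?thesis
    proof (cases "U = {}")
      case True
      have "P - {x} \<subset> P" using x by auto
      moreover have "triples_have_nested_pair f (P - {x})"
        using triples_have_nested_pair_subset[OF psubset.prems] by blast
      ultimately obtain A B where AB: "A \<union> B = P - {x}" "nested_on f A" "nested_on f B"
        using psubset.IH by meson
      then have "nested_on f (insert x A)"
        using comparable True by (auto simp: nested_on_insert)
      moreover have "insert x A \<union> B = P" using AB(1) x by auto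
      ultimately show ?thesis using AB(3) by blast
    next
      case False
      have "finite U" using psubset.hyps(1) by (simp add: U_def)
      with False U_nested obtain m where m: "m \<in> U" and least: "\<And>u. u \<in> U \<Longrightarrow> f m \<subseteq> f u"
        using nested_on_obtain_least by blast
      define R where "R = P - {x} - U"
      have below: "f y \<subseteq> f x" if "y \<in> R" for y
        using that x_max comparable unfolding R_def by blast
      have "insert m R \<subset> P" using m x unfolding R_def U_def by auto
      moreover have "triples_have_nested_pair f (insert m R)"
        using triples_have_nested_pair_subset[OF psubset.prems] calculation by blast
      ultimately obtain A0 B0 where AB0: "A0 \<union> B0 = insert m R" "nested_on f A0" "nested_on f B0"
        using psubset.IH by meson
      obtain A B where AB: "A \<union> B = insert m R" "nested_on f A" "nested_on f B" "m \<in> B"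
      proof (cases "m \<in> B0")
        case False
        then show thesis using AB0 that[of B0 A0] by blast
      qed (use AB0 in blast)
      have "\<not> f m \<subseteq> f x" using m unfolding U_def by blast
      then have "nested_on f (insert x (A - {m}))" "nested_on f (B \<union> U)"
        using nested_cover_exchange[OF AB _ _ U_nested] below least by blast+
      moreover have "insert x (A - {m}) \<union> (B \<union> U) = P"
        using AB(1,4) x m unfolding R_def U_def by auto
      ultimately show ?thesis by blast
    qed
  qed
qed

lemma nested_on_antitone_positions:
  assumes "finite C" and "nested_on f C"
  obtains q :: "'a \<Rightarrow> real" where "inj_on q C" "\<And>x. x \<in> C \<Longrightarrow> 0 < q x"
    "\<And>x y. x \<in> C \<Longrightarrow> y \<in> C \<Longrightarrow> q x \<le> q y \<Longrightarrow> f y \<subseteq> f x"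
proof -
  obtain g n where g: "g ` C = {i::nat. i < n}" "inj_on g C"
    using finite_imp_inj_to_nat_seg[OF assms(1)] by blast
  have g_less: "g x < n" if "x \<in> C" for x using g(1) that by blast
  define rank where "rank x = card {y \<in> C. f x \<subset> f y}" for x
  \<comment> \<open>the rank orders C by inclusion; ties are broken injectively by g\<close>
  define key where "key x = rank x * n + g x" for x
  have key_less: "key y < key x" if "x \<in> C" "y \<in> C" "f x \<subset> f y" for x y
  proof -
    have "{z \<in> C. f y \<subset> f z} \<subset> {z \<in> C. f x \<subset> f z}" using that by auto
    then have "rank y + 1 \<le> rank x"
      unfolding rank_def using assms(1) by (simp add: Suc_le_eq psubset_card_mono)
    then have "(rank y + 1) * n \<le> rank x * n" by (rule mult_le_mono1)
    then show ?thesis unfolding key_def using g_less[OF that(2)] by simp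
  qed
  have "inj_on key C"
  proof (rule inj_onI)
    fix x y assume "x \<in> C" "y \<in> C" "key x = key y"
    moreover have "key z mod n = g z" if "z \<in> C" for z
      using g_less[OF that] by (simp add: key_def)
    ultimately have "g x = g y" by metis
    with g(2) \<open>x \<in> C\<close> \<open>y \<in> C\<close> show "x = y" by (meson inj_onD)
  qed
  show thesis
  proof (rule that[of "\<lambda>x. real (key x) + 1"])
    show "inj_on (\<lambda>x. real (key x) + 1) C"
      using \<open>inj_on key C\<close> by (simp add: inj_on_def)
  next
    fix x y assume "x \<in> C" "y \<in> C" "real (key x) + 1 \<le> real (key y) + 1"
    with key_less[of x y] assms(2) show "f y \<subseteq> f x"
      unfolding nested_on_def by fastforce
  qed simp
qed

lemma antitone_positions_threshold:
  fixes q :: "'a \<Rightarrow> real"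
  assumes "finite C" and "\<And>x. x \<in> C \<Longrightarrow> 0 < q x"
    and "\<And>x y. x \<in> C \<Longrightarrow> y \<in> C \<Longrightarrow> q x \<le> q y \<Longrightarrow> f y \<subseteq> f x"
  obtains t where "0 \<le> t" "\<And>s. s \<in> C \<Longrightarrow> q s \<le> t \<longleftrightarrow> k \<in> f s"
proof (cases "\<exists>s\<in>C. k \<in> f s")
  case False
  then show ?thesis using that[of 0] assms(2) by force
next
  case True
  define N where "N = {s \<in> C. k \<in> f s}"
  have "finite N" "N \<noteq> {}" using assms(1) True by (auto simp: N_def)
  then have "Max (q ` N) \<in> q ` N" by (intro Max_in) auto
  then obtain u where u: "u \<in> N" "q u = Max (q ` N)" by auto
  show ?thesis
  proof (rule that[of "q u"])
    show "0 \<le> q u" using assms(2)[of u] u(1) unfolding N_def by auto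
  next
    fix s assume "s \<in> C"
    show "q s \<le> q u \<longleftrightarrow> k \<in> f s"
    proof
      assume "q s \<le> q u"
      then show "k \<in> f s" using assms(3)[OF \<open>s \<in> C\<close>, of u] u(1) by (auto simp: N_def)
    next
      assume "k \<in> f s"
      then show "q s \<le> q u" using u \<open>finite N\<close> \<open>s \<in> C\<close> by (simp add: N_def)
    qed
  qed
qed

lemma two_nested_points:
  assumes "finite A" "finite B" "A \<inter> B = {}" "nested_on f A" "nested_on f B"
  obtains p :: "'a \<Rightarrow> real" and l r :: "'b \<Rightarrow> real"
  where "inj_on p (A \<union> B)" "\<And>k. l k \<le> 0" "\<And>k. 0 \<le> r k"
    "\<And>s k. s \<in> A \<union> B \<Longrightarrow> k \<in> f s \<longleftrightarrow> l k \<le> p s \<and> p s \<le> r k"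
proof -
  obtain qA :: "'a \<Rightarrow> real" where qA: "inj_on qA A" "\<And>x. x \<in> A \<Longrightarrow> 0 < qA x"
    "\<And>x y. x \<in> A \<Longrightarrow> y \<in> A \<Longrightarrow> qA x \<le> qA y \<Longrightarrow> f y \<subseteq> f x"
    using nested_on_antitone_positions[OF assms(1,4)] by blast
  obtain qB :: "'a \<Rightarrow> real" where qB: "inj_on qB B" "\<And>x. x \<in> B \<Longrightarrow> 0 < qB x"
    "\<And>x y. x \<in> B \<Longrightarrow> y \<in> B \<Longrightarrow> qB x \<le> qB y \<Longrightarrow> f y \<subseteq> f x"
    using nested_on_antitone_positions[OF assms(2,5)] by blast
  have "\<exists>t\<ge>0. \<forall>s\<in>A. qA s \<le> t \<longleftrightarrow> k \<in> f s" for k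
    by (rule antitone_positions_threshold[OF assms(1), of qA f k]) (use qA in auto)
  then obtain tA where tA: "\<And>k. 0 \<le> tA k" "\<And>k s. s \<in> A \<Longrightarrow> qA s \<le> tA k \<longleftrightarrow> k \<in> f s"
    by metis
  have "\<exists>t\<ge>0. \<forall>s\<in>B. qB s \<le> t \<longleftrightarrow> k \<in> f s" for k
    by (rule antitone_positions_threshold[OF assms(2), of qB f k]) (use qB in auto)
  then obtain tB where tB: "\<And>k. 0 \<le> tB k" "\<And>k s. s \<in> B \<Longrightarrow> qB s \<le> tB k \<longleftrightarrow> k \<in> f s"
    by metis
  define p where "p s = (if s \<in> A then - qA s else qB s)" for s
  show thesis
  proof (rule that[of p "\<lambda>k. - tA k" tB])
    have p_pos: "0 < p s \<longleftrightarrow> s \<notin> A" if "s \<in> A \<union> B" for s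
      using that qA(2) qB(2) unfolding p_def by force
    show "inj_on p (A \<union> B)"
    proof (rule inj_onI)
      fix x y assume xy: "x \<in> A \<union> B" "y \<in> A \<union> B" "p x = p y"
      then have "x \<in> A \<longleftrightarrow> y \<in> A" using p_pos by metis
      with xy assms(3) inj_onD[OF qA(1)] inj_onD[OF qB(1)] show "x = y"
        unfolding p_def by (cases "x \<in> A") auto
    qed
  next
    fix s k assume "s \<in> A \<union> B"
    show "k \<in> f s \<longleftrightarrow> - tA k \<le> p s \<and> p s \<le> tB k"
    proof (cases "s \<in> A")
      case True
      then show ?thesis using qA(2)[OF True] tA(2)[OF True, of k] tB(1)[of k]
        unfolding p_def by auto
    next
      case False
      with \<open>s \<in> A \<union> B\<close> have "s \<in> B" by blast
      then show ?thesis using False qB(2)[OF \<open>s \<in> B\<close>] tB(2)[OF \<open>s \<in> B\<close>, of k] tA(1)[of k]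
        unfolding p_def by auto
    qed
  qed (use tA tB in auto)
qed

lemma split_graph_interval_by_points:
  fixes p l r :: "'a \<Rightarrow> real"
  assumes "simple_graph V E" "S \<union> K = V" "S \<inter> K = {}"
    and "independent_set V E S" "clique V E K"
    and "inj_on p S" "\<And>k. k \<in> K \<Longrightarrow> l k \<le> 0 \<and> 0 \<le> r k"
    and "\<And>s k. s \<in> S \<Longrightarrow> k \<in> K \<Longrightarrow> E s k \<longleftrightarrow> l k \<le> p s \<and> p s \<le> r k"
  shows "interval_graph V E"
proof -
  define lo where "lo v = (if v \<in> S then p v else l v)" for v
  define hi where "hi v = (if v \<in> S then p v else r v)" for v
  have E_sym: "E u v \<longleftrightarrow> E v u" for u v
    using assms(1) unfolding simple_graph_def by blast
  have lo_hi: "lo v \<le> hi v" if "v \<in> V" for v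
    using that assms(2) assms(7)[of v] unfolding lo_def hi_def by auto
  have "E u v \<longleftrightarrow> {lo u..hi u} \<inter> {lo v..hi v} \<noteq> {}"
    if uv: "u \<in> V" "v \<in> V" "u \<noteq> v" for u v
  proof -
    consider "u \<in> S" "v \<in> S" | "u \<in> S" "v \<in> K" | "u \<in> K" "v \<in> S" | "u \<in> K" "v \<in> K"
      using uv assms(2) by blast
    then show ?thesis
    proof cases
      case 1
      then show ?thesis
        using uv(3) assms(4) inj_onD[OF assms(6)] unfolding independent_set_def lo_def hi_def
        by auto
    next
      case 2
      then show ?thesis using assms(3,8) unfolding lo_def hi_def by auto
    next
      case 3
      then show ?thesis using assms(3) assms(8)[of v u] E_sym unfolding lo_def hi_def by auto
    next
      case 4
      then have "0 \<in> {lo u..hi u} \<inter> {lo v..hi v}"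
        using assms(3,7) unfolding lo_def hi_def by auto
      with 4 show ?thesis using uv(3) assms(5) unfolding clique_def by auto
    qed
  qed
  then show ?thesis unfolding interval_graph_def using lo_hi by blast
qed

theorem lemma2p3:
  fixes V :: "'a set" and E :: "'a \<Rightarrow> 'a \<Rightarrow> bool" and S K :: "'a set"
  assumes "simple_graph V E"
    and "S \<union> K = V" and "S \<inter> K = {}"
    and "independent_set V E S" and "clique V E K"
    and "\<forall>u\<in>S. \<forall>v\<in>S. \<forall>w\<in>S. u \<noteq> v \<and> u \<noteq> w \<and> v \<noteq> w \<longrightarrow>
           (\<exists>x\<in>{u, v, w}. \<exists>y\<in>{u, v, w}. x \<noteq> y \<and> nbhd V E y \<subseteq> nbhd V E x)"
  shows "interval_graph V E"
proof -
  have "finite S" using assms(1,2) unfolding simple_graph_def by blast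
  moreover have "triples_have_nested_pair (nbhd V E) S"
    using assms(6) unfolding triples_have_nested_pair_def .
  ultimately obtain A B where AB: "A \<union> B = S" "nested_on (nbhd V E) A" "nested_on (nbhd V E) B"
    by (metis cover_by_two_nested)
  have "finite A" "finite (B - A)" "A \<inter> (B - A) = {}" "nested_on (nbhd V E) (B - A)"
    using \<open>finite S\<close> AB(1) nested_on_subset[OF AB(3)] by auto
  from two_nested_points[OF this(1-3) AB(2) this(4)]
  obtain p l r :: "'a \<Rightarrow> real" where plr: "inj_on p (A \<union> (B - A))" "\<And>k. l k \<le> 0" "\<And>k. 0 \<le> r k"
    "\<And>s k. s \<in> A \<union> (B - A) \<Longrightarrow> k \<in> nbhd V E s \<longleftrightarrow> l k \<le> p s \<and> p s \<le> r k"
    by metis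
  have S_eq: "A \<union> (B - A) = S" using AB(1) by blast
  have adjacency: "E s k \<longleftrightarrow> l k \<le> p s \<and> p s \<le> r k" if "s \<in> S" "k \<in> K" for s k
    using plr(4)[unfolded S_eq, OF that(1)] that assms(2) unfolding nbhd_def by auto
  show ?thesis
    using split_graph_interval_by_points[OF assms(1-5) plr(1)[unfolded S_eq]] plr(2,3) adjacency
    by blast
qed

end
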